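(* Let $f:\mathbb{R}^n\to\mathbb{R}^m$ be continuous at $\bar x\in\mathbb{R}^n$. Then $f$ is strongly regular around $\bar x$ if and only if $f$ is both linearly open (equivalently, metrically regular) around $\bar x$ and metrically injective around $\bar x$. In this case $\operatorname{inj}(f,\bar x)\ge\operatorname{lop}(f,\bar x)$.
   Context: $B(x,r)$ and $B^\circ(x,r)$ denote closed and open balls. $f$ is linearly open around $\bar x$ if there exist $\alpha>0$ and neighbourhoods $U$ of $\bar x$, $V$ of $f(\bar x)$ with $B^\circ(f(x),\alpha r)\cap V\subseteq f(B^\circ(x,r))$ for all $x\in U$, $r>0$; $\operatorname{lop}(f,\bar x)$ is the supremum of such $\alpha$ ($0$ if none). (Equivalently, $f$ is metrically regular around $\bar x$: there exist $\kappa>0$ and neighbourhoods $U,V$ with $\operatorname{dist}(x,f^{-1}(y))\le\kappa\|y-f(x)\|$ for all $(x,y)\in U\times V$; the infimum of such $\kappa$ is $\operatorname{reg}(f,\bar x)$, and $\operatorname{lop}(f,\bar x)\cdot\operatorname{reg}(f,\bar x)=1$.) $f$ is strongly regular around $\bar x$ if it is linearly open around $\bar x$ and there exist neighbourhoods $U$ of $\bar x$ and $V$ of $f(\bar x)$ such that $f^{-1}(y)\cap U$ is a singleton for every $y\in V$. $f$ is metrically injective around $\bar x$ if there exist $\beta,\delta>0$ with $\|f(x_1)-f(x_2)\|\ge\beta\|x_1-x_2\|$ for all $x_1,x_2\in B(\bar x,\delta)$; $\operatorname{inj}(f,\bar x)$ is the supremum of such $\beta$. *)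

theory Defs
  imports "HOL-Analysis.Analysis"
begin

text \<open>A set U is a neighbourhood of x iff x lies in its interior.\<close>

definition lin_open_with :: "('a::euclidean_space \<Rightarrow> 'b::euclidean_space) \<Rightarrow> 'a \<Rightarrow> real \<Rightarrow> bool" where
  "lin_open_with f xbar \<alpha> \<longleftrightarrow> \<alpha> > 0 \<and>
     (\<exists>U V. xbar \<in> interior U \<and> f xbar \<in> interior V \<and>
        (\<forall>x\<in>U. \<forall>r>0. ball (f x) (\<alpha> * r) \<inter> V \<subseteq> f ` ball x r))"

definition linearly_open :: "('a::euclidean_space \<Rightarrow> 'b::euclidean_space) \<Rightarrow> 'a \<Rightarrow> bool" where
  "linearly_open f xbar \<longleftrightarrow> (\<exists>\<alpha>. lin_open_with f xbar \<alpha>)"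

definition lop :: "('a::euclidean_space \<Rightarrow> 'b::euclidean_space) \<Rightarrow> 'a \<Rightarrow> ereal" where
  "lop f xbar = (if linearly_open f xbar then Sup {ereal \<alpha> | \<alpha>. lin_open_with f xbar \<alpha>} else 0)"

definition strongly_regular :: "('a::euclidean_space \<Rightarrow> 'b::euclidean_space) \<Rightarrow> 'a \<Rightarrow> bool" where
  "strongly_regular f xbar \<longleftrightarrow> linearly_open f xbar \<and>
     (\<exists>U V. xbar \<in> interior U \<and> f xbar \<in> interior V \<and>
        (\<forall>y\<in>V. \<exists>!x. x \<in> U \<and> f x = y))"

definition metr_inj_with :: "('a::euclidean_space \<Rightarrow> 'b::euclidean_space) \<Rightarrow> 'a \<Rightarrow> real \<Rightarrow> bool" where
  "metr_inj_with f xbar \<beta> \<longleftrightarrow> \<beta> > 0 \<and>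
     (\<exists>\<delta>>0. \<forall>x1\<in>cball xbar \<delta>. \<forall>x2\<in>cball xbar \<delta>. norm (f x1 - f x2) \<ge> \<beta> * norm (x1 - x2))"

definition metrically_injective :: "('a::euclidean_space \<Rightarrow> 'b::euclidean_space) \<Rightarrow> 'a \<Rightarrow> bool" where
  "metrically_injective f xbar \<longleftrightarrow> (\<exists>\<beta>. metr_inj_with f xbar \<beta>)"

definition inj_mod :: "('a::euclidean_space \<Rightarrow> 'b::euclidean_space) \<Rightarrow> 'a \<Rightarrow> ereal" where
  "inj_mod f xbar = (if metrically_injective f xbar then Sup {ereal \<beta> | \<beta>. metr_inj_with f xbar \<beta>} else 0)"

end

theory Submission
  imports Defs
begin

text \<open>
  If f is linearly open with modulus \<alpha> and x2 is the only preimage of f x2 near x1, then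
  for every r > d(f x1, f x2) / \<alpha> openness yields a preimage of f x2 within distance r of
  x1, which must be x2; hence \<alpha> d(x1, x2) \<le> d(f x1, f x2), i.e. inj(f, x) \<ge> lop(f, x).
  Continuity of f at x is what keeps f x2 inside the neighbourhoods where openness and
  uniqueness hold. Conversely, metric injectivity on a ball gives uniqueness of preimages,
  and linear openness at x gives their existence.
\<close>

lemma lin_open_at_unique_preimage_imp_dist_le:
  fixes f :: "'a::metric_space \<Rightarrow> 'b::metric_space"
  assumes "\<alpha> > 0"
    and open_at: "\<And>r. r > 0 \<Longrightarrow> ball (f x1) (\<alpha> * r) \<inter> V \<subseteq> f ` ball x1 r"
    and "ball x1 \<rho> \<subseteq> U" and "f x2 \<in> V"
    and unique: "\<And>x. x \<in> U \<Longrightarrow> f x = f x2 \<Longrightarrow> x = x2"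
    and close: "dist (f x1) (f x2) < \<alpha> * \<rho>"
  shows "\<alpha> * dist x1 x2 \<le> dist (f x1) (f x2)"
proof -
  have "dist x1 x2 \<le> dist (f x1) (f x2) / \<alpha>"
  proof (rule dense_ge_bounded)
    show "dist (f x1) (f x2) / \<alpha> < \<rho>" using close \<open>\<alpha> > 0\<close> by (simp add: field_simps)
  next
    fix r assume r: "dist (f x1) (f x2) / \<alpha> < r" "r < \<rho>"
    moreover have "0 \<le> dist (f x1) (f x2) / \<alpha>" using \<open>\<alpha> > 0\<close> by simp
    ultimately have "r > 0" by linarith
    have "f x2 \<in> ball (f x1) (\<alpha> * r) \<inter> V"
      using r(1) \<open>\<alpha> > 0\<close> \<open>f x2 \<in> V\<close> by (simp add: field_simps)
    then have "f x2 \<in> f ` ball x1 r" by (rule rev_subsetD[OF _ open_at[OF \<open>r > 0\<close>]])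
    then obtain x' where x': "x' \<in> ball x1 r" "f x' = f x2" by (auto elim!: imageE)
    have "x' \<in> U" using x'(1) r(2) \<open>ball x1 \<rho> \<subseteq> U\<close> by auto
    then have "x' = x2" using unique x'(2) by blast
    then show "dist x1 x2 \<le> r" using x'(1) by simp
  qed
  then show ?thesis using \<open>\<alpha> > 0\<close> by (simp add: field_simps)
qed

lemma strongly_regular_lin_open_with_imp_metr_inj_with:
  fixes f :: "'a::euclidean_space \<Rightarrow> 'b::euclidean_space"
  assumes cont: "continuous (at xbar) f" and sr: "strongly_regular f xbar"
    and lo: "lin_open_with f xbar \<alpha>"
  shows "metr_inj_with f xbar \<alpha>"
proof -
  obtain U0 V0 where "\<alpha> > 0" "xbar \<in> interior U0" "f xbar \<in> interior V0"
    and open_at: "\<And>x r. x \<in> U0 \<Longrightarrow> r > 0 \<Longrightarrow> ball (f x) (\<alpha> * r) \<inter> V0 \<subseteq> f ` ball x r"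
    using lo unfolding lin_open_with_def by blast
  obtain U1 V1 where "xbar \<in> interior U1" "f xbar \<in> interior V1"
    and unique: "\<And>y. y \<in> V1 \<Longrightarrow> \<exists>!x. x \<in> U1 \<and> f x = y"
    using sr unfolding strongly_regular_def by blast
  have "xbar \<in> interior (U0 \<inter> U1)" "f xbar \<in> interior (V0 \<inter> V1)"
    using \<open>xbar \<in> interior U0\<close> \<open>xbar \<in> interior U1\<close>
      \<open>f xbar \<in> interior V0\<close> \<open>f xbar \<in> interior V1\<close> by simp_all
  then obtain \<epsilon> \<eta> where "\<epsilon> > 0" "\<eta> > 0"
    and U: "ball xbar \<epsilon> \<subseteq> U0 \<inter> U1" and V: "ball (f xbar) \<eta> \<subseteq> V0 \<inter> V1"
    using mem_interior by meson
  have "min \<eta> (\<alpha> * \<epsilon> / 4) > 0" using \<open>\<epsilon> > 0\<close> \<open>\<eta> > 0\<close> \<open>\<alpha> > 0\<close> by simp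
  then obtain \<delta>0 where "\<delta>0 > 0" and cont_at:
    "\<And>x. dist x xbar < \<delta>0 \<Longrightarrow> dist (f x) (f xbar) < min \<eta> (\<alpha> * \<epsilon> / 4)"
    using cont unfolding continuous_at_eps_delta by blast
  define \<delta> where "\<delta> = min \<delta>0 \<epsilon> / 4"
  have "\<alpha> * norm (x1 - x2) \<le> norm (f x1 - f x2)"
    if x: "x1 \<in> cball xbar \<delta>" "x2 \<in> cball xbar \<delta>" for x1 x2
  proof -
    have near: "dist x1 xbar < \<delta>0" "dist x2 xbar < \<delta>0" "dist x1 xbar < \<epsilon> / 2"
      "dist x2 xbar < \<epsilon>"
      using x \<open>\<delta>0 > 0\<close> \<open>\<epsilon> > 0\<close> unfolding \<delta>_def by (auto simp: dist_commute)
    have f1: "dist (f x1) (f xbar) < \<alpha> * \<epsilon> / 4" and f2: "f x2 \<in> V0" "f x2 \<in> V1"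
      using cont_at[OF near(1)] cont_at[OF near(2)] V by (auto simp: dist_commute)
    have close: "dist (f x1) (f x2) < \<alpha> * (\<epsilon> / 2)"
      using dist_triangle2[of "f x1" "f x2" "f xbar"] f1 cont_at[OF near(2)] by simp
    have "ball x1 (\<epsilon> / 2) \<subseteq> ball xbar \<epsilon>"
      using near(3) by (simp add: ball_subset_ball_iff dist_commute)
    then have ball_U1: "ball x1 (\<epsilon> / 2) \<subseteq> U1" and "x1 \<in> U0" and "x2 \<in> U1"
      using U \<open>\<epsilon> > 0\<close> centre_in_ball[of x1 "\<epsilon> / 2"] near(4)
      by (simp_all add: subset_iff dist_commute)
    have "\<alpha> * dist x1 x2 \<le> dist (f x1) (f x2)"
    proof (rule lin_open_at_unique_preimage_imp_dist_le[of \<alpha> f x1 V0 "\<epsilon> / 2" U1 x2])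
      show "\<And>x. x \<in> U1 \<Longrightarrow> f x = f x2 \<Longrightarrow> x = x2"
        using unique[OF f2(2)] \<open>x2 \<in> U1\<close> by blast
    qed (use \<open>\<alpha> > 0\<close> open_at \<open>x1 \<in> U0\<close> f2(1) ball_U1 close in auto)
    then show ?thesis by (simp add: dist_norm)
  qed
  moreover have "\<delta> > 0" using \<open>\<delta>0 > 0\<close> \<open>\<epsilon> > 0\<close> unfolding \<delta>_def by simp
  ultimately show ?thesis unfolding metr_inj_with_def using \<open>\<alpha> > 0\<close> by blast
qed

lemma metr_inj_with_imp_inj_on_cball:
  assumes "metr_inj_with f xbar \<beta>"
  obtains \<delta> where "\<delta> > 0" "inj_on f (cball xbar \<delta>)"
proof -
  obtain \<delta> where "\<beta> > 0" "\<delta> > 0" and bound: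
    "\<And>x1 x2. x1 \<in> cball xbar \<delta> \<Longrightarrow> x2 \<in> cball xbar \<delta> \<Longrightarrow> \<beta> * norm (x1 - x2) \<le> norm (f x1 - f x2)"
    using assms unfolding metr_inj_with_def by blast
  have "inj_on f (cball xbar \<delta>)"
    using bound \<open>\<beta> > 0\<close> by (intro inj_onI) (fastforce simp: mult_le_0_iff)
  then show thesis using that \<open>\<delta> > 0\<close> by blast
qed

lemma linearly_open_metrically_injective_imp_strongly_regular:
  fixes f :: "'a::euclidean_space \<Rightarrow> 'b::euclidean_space"
  assumes lo: "linearly_open f xbar" and mi: "metrically_injective f xbar"
  shows "strongly_regular f xbar"
proof -
  obtain \<alpha> U0 V0 where "\<alpha> > 0" "xbar \<in> interior U0" "f xbar \<in> interior V0"
    and open_at: "\<And>x r. x \<in> U0 \<Longrightarrow> r > 0 \<Longrightarrow> ball (f x) (\<alpha> * r) \<inter> V0 \<subseteq> f ` ball x r"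
    using lo unfolding linearly_open_def lin_open_with_def by blast
  obtain \<delta> where "\<delta> > 0" and inj: "inj_on f (cball xbar \<delta>)"
    using mi metr_inj_with_imp_inj_on_cball unfolding metrically_injective_def by blast
  define V where "V = ball (f xbar) (\<alpha> * \<delta>) \<inter> interior V0"
  have "f xbar \<in> interior V"
    unfolding V_def using \<open>\<alpha> > 0\<close> \<open>\<delta> > 0\<close> \<open>f xbar \<in> interior V0\<close> by (simp add: interior_open)
  moreover have "\<exists>!x. x \<in> cball xbar \<delta> \<and> f x = y" if "y \<in> V" for y
  proof -
    have "y \<in> ball (f xbar) (\<alpha> * \<delta>) \<inter> V0" using that interior_subset unfolding V_def by blast
    also have "\<dots> \<subseteq> f ` ball xbar \<delta>"
      using open_at \<open>\<delta> > 0\<close> \<open>xbar \<in> interior U0\<close> interior_subset by blast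
    also have "\<dots> \<subseteq> f ` cball xbar \<delta>" by (intro image_mono ball_subset_cball)
    finally have "y \<in> f ` cball xbar \<delta>" .
    then show ?thesis using inj unfolding inj_on_def by blast
  qed
  moreover have "xbar \<in> interior (cball xbar \<delta>)" using \<open>\<delta> > 0\<close> by simp
  ultimately show ?thesis unfolding strongly_regular_def using lo by blast
qed

theorem mainTheorem4:
  fixes f :: "'a::euclidean_space \<Rightarrow> 'b::euclidean_space" and xbar :: 'a
  assumes "continuous (at xbar) f"
  shows "(strongly_regular f xbar \<longleftrightarrow> linearly_open f xbar \<and> metrically_injective f xbar)
         \<and> (strongly_regular f xbar \<longrightarrow> inj_mod f xbar \<ge> lop f xbar)"
proof -
  have moduli: "lin_open_with f xbar \<alpha> \<Longrightarrow> metr_inj_with f xbar \<alpha>" if "strongly_regular f xbar" for \<alpha>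
    using strongly_regular_lin_open_with_imp_metr_inj_with[OF assms that] .
  have lo_mi: "linearly_open f xbar \<and> metrically_injective f xbar" if "strongly_regular f xbar"
    using that moduli[OF that] unfolding strongly_regular_def linearly_open_def metrically_injective_def
    by blast
  have "lop f xbar \<le> inj_mod f xbar" if "strongly_regular f xbar"
    using lo_mi[OF that] moduli[OF that] unfolding lop_def inj_mod_def
    by (auto intro!: Sup_subset_mono)
  then show ?thesis
    using lo_mi linearly_open_metrically_injective_imp_strongly_regular by blast
qed

end
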